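(* Let $\alpha\in(0,1)$, $p\in(0,1]$, $\rho\in(0,1)$, $m=\lfloor\alpha n\rfloor$, let $B$ be an $n\times(n-m)$ matrix with i.i.d. $\mathcal N(0,1)$ entries, and fix $T\subseteq\{1,\dots,n\}$ with $|T|=\rho n$ and a sign pattern $\sigma\in\{-1,+1\}^T$. For $\mathbf z\in\mathcal S$ let $T^-(\mathbf z)=\{i\in T:(B\mathbf z)_i\sigma_i<0\}$. There exist constants $\tilde\lambda_{\max}(\alpha,p,\rho)>0$ and $c_{15}>0$ such that for all sufficiently large $n$, with probability at least $1-e^{-c_{15}n}$, $\|B_{T^-(\mathbf z)}\mathbf z\|_p^p<\rho\,\tilde\lambda_{\max}(\alpha,p,\rho)\,n$ for every $\mathbf z\in\mathcal S$.
   Context: $\mathcal S$ is the unit Euclidean sphere in $\mathbb R^{n-m}$; $B_S$ is the submatrix of rows of $B$ indexed by $S$; $\|\mathbf v\|_p^p=\sum_i|v_i|^p$. *)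

theory Defs
  imports "HOL-Probability.Probability"
begin

definition gaussian_matrix :: "nat \<Rightarrow> nat \<Rightarrow> (nat \<times> nat \<Rightarrow> real) measure" where
  "gaussian_matrix n k = PiM ({..<n} \<times> {..<k}) (\<lambda>_. density lborel std_normal_density)"

definition mat_vec :: "(nat \<times> nat \<Rightarrow> real) \<Rightarrow> nat \<Rightarrow> (nat \<Rightarrow> real) \<Rightarrow> nat \<Rightarrow> real" where
  "mat_vec B k z i = (\<Sum>j<k. B (i, j) * z j)"

definition unit_sphere :: "nat \<Rightarrow> (nat \<Rightarrow> real) set" where
  "unit_sphere k = {z. (\<forall>j\<ge>k. z j = 0) \<and> (\<Sum>j<k. (z j)\<^sup>2) = 1}"

definition T_minus :: "(nat \<times> nat \<Rightarrow> real) \<Rightarrow> nat \<Rightarrow> nat set \<Rightarrow> (nat \<Rightarrow> real) \<Rightarrow> (nat \<Rightarrow> real) \<Rightarrow> nat set" where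
  "T_minus B k T \<sigma> z = {i \<in> T. mat_vec B k z i * \<sigma> i < 0}"

end

theory Submission
  imports Defs
begin

(* The bound holds for a soft reason: on the sphere, the negative
   part of B z restricted to T is dominated coordinatewise by |(B z)_i|, and
   |x| powr p <= 1 + x^2 for 0 < p <= 1, so the quantity in question is at most
   n + ||B z||^2 <= n + ||B||^2, where ||B|| is the operator norm of B.  It thus
   suffices that ||B|| = O(sqrt n) with probability 1 - exp(-n). *)


section \<open>Chernoff bound for Gaussian linear forms\<close>

abbreviation std_normal :: "real measure" where
  "std_normal \<equiv> density lborel (\<lambda>x. ennreal (std_normal_density x))"

lemma std_normal_mgf:
  "(\<integral>\<^sup>+ y. ennreal (exp (c * y)) \<partial>std_normal) = ennreal (exp (c\<^sup>2 / 2))"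
proof -
  have shift: "std_normal_density y * exp (c * y) = exp (c\<^sup>2/2) * normal_density c 1 y" for y
  proof -
    have "- y\<^sup>2 / 2 + c * y = c\<^sup>2/2 + (-(y - c)\<^sup>2 / 2)"
      by (simp add: power2_eq_square field_simps)
    then have "exp (- y\<^sup>2 / 2) * exp (c * y) = exp (c\<^sup>2/2) * exp (-(y - c)\<^sup>2 / 2)"
      by (simp add: exp_add[symmetric])
    then show ?thesis unfolding normal_density_def by simp
  qed
  have total: "(\<integral>\<^sup>+ y. ennreal (normal_density c 1 y) \<partial>lborel) = 1"
  proof -
    interpret prob_space "density lborel (normal_density c 1)"
      by (rule prob_space_normal_density) simp
    show ?thesis using emeasure_space_1 by (simp add: emeasure_density)
  qed
  have "(\<integral>\<^sup>+ y. ennreal (exp (c * y)) \<partial>std_normal)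
      = (\<integral>\<^sup>+ y. ennreal (std_normal_density y) * ennreal (exp (c * y)) \<partial>lborel)"
    by (rule nn_integral_density) auto
  also have "\<dots> = (\<integral>\<^sup>+ y. ennreal (exp (c\<^sup>2/2)) * ennreal (normal_density c 1 y) \<partial>lborel)"
    by (intro nn_integral_cong) (simp add: ennreal_mult'[symmetric] shift normal_density_nonneg)
  also have "\<dots> = ennreal (exp (c\<^sup>2/2))"
    by (subst nn_integral_cmult) (auto simp: total)
  finally show ?thesis .
qed

lemma prob_space_gaussian_matrix: "prob_space (gaussian_matrix n k)"
  unfolding gaussian_matrix_def
  by (intro prob_space_PiM prob_space_normal_density) simp

lemma gaussian_linear_form_exp_tail:
  fixes a :: "nat \<times> nat \<Rightarrow> real" and l t :: real
  assumes l: "l \<ge> 0"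
  shows "emeasure (gaussian_matrix n k)
           {B \<in> space (gaussian_matrix n k). t \<le> (\<Sum>x\<in>{..<n}\<times>{..<k}. a x * B x)}
     \<le> ennreal (exp (- l * t + l\<^sup>2 * (\<Sum>x\<in>{..<n}\<times>{..<k}. (a x)\<^sup>2) / 2))"
proof -
  let ?I = "{..<n}\<times>{..<k}"
  let ?M = "gaussian_matrix n k"
  let ?A = "{B \<in> space ?M. t \<le> (\<Sum>x\<in>?I. a x * B x)}"
  let ?F = "\<lambda>B. ennreal (exp (- l * t)) * (\<Prod>x\<in>?I. ennreal (exp (l * a x * B x)))"
  interpret P: product_prob_space "\<lambda>_. std_normal"
    by (intro product_prob_spaceI prob_space_normal_density) simp
  have M: "?M = PiM ?I (\<lambda>_. std_normal)" by (simp add: gaussian_matrix_def)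
  have A: "?A \<in> sets ?M" unfolding M by measurable
  have markov: "indicator ?A B \<le> ?F B" for B
  proof -
    have "?F B = ennreal (exp (- l * t)) * ennreal (exp (l * (\<Sum>x\<in>?I. a x * B x)))"
      by (simp add: prod_ennreal exp_sum sum_distrib_left mult.assoc)
    then have "?F B = ennreal (exp (- l * t) * exp (l * (\<Sum>x\<in>?I. a x * B x)))"
      by (simp add: ennreal_mult)
    moreover have "1 \<le> exp (- l * t) * exp (l * (\<Sum>x\<in>?I. a x * B x))" if "B \<in> ?A"
      using that l by (simp add: exp_add[symmetric] mult_left_mono)
    ultimately show ?thesis by (cases "B \<in> ?A") auto
  qed
  have "emeasure ?M ?A = (\<integral>\<^sup>+ B. indicator ?A B \<partial>?M)"
    using A by simp
  also have "\<dots> \<le> (\<integral>\<^sup>+ B. ?F B \<partial>?M)"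
    using markov by (rule nn_integral_mono)
  also have "\<dots> = ennreal (exp (- l * t)) * (\<Prod>x\<in>?I. \<integral>\<^sup>+ y. ennreal (exp ((l * a x) * y)) \<partial>std_normal)"
    unfolding M
    by (subst nn_integral_cmult, measurable, subst P.product_nn_integral_prod) auto
  also have "\<dots> = ennreal (exp (- l * t)) * ennreal (exp (\<Sum>x\<in>?I. (l * a x)\<^sup>2 / 2))"
    by (simp add: std_normal_mgf prod_ennreal exp_sum)
  also have "(\<Sum>x\<in>?I. (l * a x)\<^sup>2 / 2) = l\<^sup>2 * (\<Sum>x\<in>?I. (a x)\<^sup>2) / 2"
    by (simp add: sum_distrib_left sum_divide_distrib power_mult_distrib)
  finally show ?thesis by (simp add: ennreal_mult[symmetric] exp_add[symmetric])
qed

lemma gaussian_linear_form_tail: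
  fixes a :: "nat \<times> nat \<Rightarrow> real"
  assumes s: "(\<Sum>x\<in>{..<n}\<times>{..<k}. (a x)\<^sup>2) \<le> s" "s > 0" and t: "t \<ge> 0"
  shows "measure (gaussian_matrix n k)
           {B \<in> space (gaussian_matrix n k). t \<le> (\<Sum>x\<in>{..<n}\<times>{..<k}. a x * B x)}
     \<le> exp (- t\<^sup>2 / (2 * s))"
proof -
  interpret prob_space "gaussian_matrix n k" by (rule prob_space_gaussian_matrix)
  let ?S = "\<Sum>x\<in>{..<n}\<times>{..<k}. (a x)\<^sup>2"
  have "(t/s)\<^sup>2 * ?S \<le> (t/s)\<^sup>2 * s"
    using s by (intro mult_left_mono) auto
  then have "- (t/s) * t + (t/s)\<^sup>2 * ?S / 2 \<le> - t\<^sup>2 / (2 * s)"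
    using s by (simp add: power2_eq_square field_simps)
  then have "emeasure (gaussian_matrix n k)
           {B \<in> space (gaussian_matrix n k). t \<le> (\<Sum>x\<in>{..<n}\<times>{..<k}. a x * B x)}
      \<le> ennreal (exp (- t\<^sup>2 / (2 * s)))"
    using gaussian_linear_form_exp_tail[of "t/s" n k t a] s t
    by (meson divide_nonneg_pos ennreal_leI exp_le_cancel_iff less_imp_le order_trans)
  then show ?thesis by (simp add: emeasure_eq_measure ennreal_le_iff)
qed


section \<open>The operator norm and the net argument\<close>

definition bilin :: "(nat \<times> nat \<Rightarrow> real) \<Rightarrow> nat \<Rightarrow> nat \<Rightarrow> (nat \<Rightarrow> real) \<Rightarrow> (nat \<Rightarrow> real) \<Rightarrow> real" where
  "bilin B n k u w = (\<Sum>i<n. \<Sum>j<k. B (i,j) * u i * w j)"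

definition l2norm :: "nat \<Rightarrow> (nat \<Rightarrow> real) \<Rightarrow> real" where
  "l2norm d u = sqrt (\<Sum>i<d. (u i)\<^sup>2)"

definition bilin_values :: "(nat \<times> nat \<Rightarrow> real) \<Rightarrow> nat \<Rightarrow> nat \<Rightarrow> real set" where
  "bilin_values B n k =
     {bilin B n k u w | u w. (\<Sum>i<n. (u i)\<^sup>2) \<le> 1 \<and> (\<Sum>j<k. (w j)\<^sup>2) \<le> 1}"

definition mat_norm :: "(nat \<times> nat \<Rightarrow> real) \<Rightarrow> nat \<Rightarrow> nat \<Rightarrow> real" where
  "mat_norm B n k = Sup (bilin_values B n k)"

lemma bilin_diff_left: "bilin B n k (\<lambda>i. u i - v i) w = bilin B n k u w - bilin B n k v w"
  by (simp add: bilin_def sum_subtractf[symmetric] algebra_simps)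

lemma bilin_diff_right: "bilin B n k u (\<lambda>j. w j - v j) = bilin B n k u w - bilin B n k u v"
  by (simp add: bilin_def sum_subtractf[symmetric] algebra_simps)

lemma bilin_scale: "bilin B n k (\<lambda>i. a * u i) (\<lambda>j. b * w j) = a * b * bilin B n k u w"
  by (simp add: bilin_def sum_distrib_left algebra_simps)

lemma bilin_null:
  assumes "(\<Sum>i<n. (u i)\<^sup>2) = 0 \<or> (\<Sum>j<k. (w j)\<^sup>2) = 0"
  shows "bilin B n k u w = 0"
  using assms by (subst (asm) (1 2) sum_nonneg_eq_0_iff) (auto simp: bilin_def)

lemma coord_le_1:
  assumes "(\<Sum>i<(d::nat). (u i)\<^sup>2) \<le> (1::real)" "i < d"
  shows "\<bar>u i\<bar> \<le> 1"
proof -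
  have "(u i)\<^sup>2 \<le> (\<Sum>i<d. (u i)\<^sup>2)" by (rule member_le_sum) (use assms(2) in auto)
  then have "(u i)\<^sup>2 \<le> 1" using assms(1) by simp
  then show ?thesis by (simp add: abs_square_le_1)
qed

lemma bilin_values_bdd: "bdd_above (bilin_values B n k)"
proof (rule bdd_aboveI)
  fix s assume "s \<in> bilin_values B n k"
  then obtain u w where s: "s = bilin B n k u w"
    and u: "(\<Sum>i<n. (u i)\<^sup>2) \<le> 1" and w: "(\<Sum>j<k. (w j)\<^sup>2) \<le> 1"
    unfolding bilin_values_def by blast
  have "B (i, j) * u i * w j \<le> \<bar>B (i,j)\<bar>" if "i < n" "j < k" for i j
  proof -
    have "\<bar>u i * w j\<bar> \<le> 1"
      using coord_le_1[OF u] coord_le_1[OF w] that by (simp add: abs_mult mult_le_one)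
    then have "\<bar>B (i,j) * (u i * w j)\<bar> \<le> \<bar>B (i,j)\<bar>"
      by (simp add: abs_mult mult_left_le)
    then show ?thesis by (simp add: mult.assoc)
  qed
  then show "s \<le> (\<Sum>i<n. \<Sum>j<k. \<bar>B (i,j)\<bar>)"
    unfolding s bilin_def by (intro sum_mono) auto
qed

lemma mat_norm_nonneg: "0 \<le> mat_norm B n k"
proof -
  have "bilin B n k (\<lambda>_. 0) (\<lambda>_. 0) \<in> bilin_values B n k"
    unfolding bilin_values_def by (intro CollectI exI[of _ "\<lambda>_. 0"]) simp
  then show ?thesis
    unfolding mat_norm_def using bilin_values_bdd by (simp add: bilin_def cSup_upper)
qed

lemma bilin_le_mat_norm: "bilin B n k u w \<le> mat_norm B n k * l2norm n u * l2norm k w"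
proof (cases "(\<Sum>i<n. (u i)\<^sup>2) = 0 \<or> (\<Sum>j<k. (w j)\<^sup>2) = 0")
  case True
  then show ?thesis
    using mat_norm_nonneg by (simp add: bilin_null l2norm_def sum_nonneg)
next
  case False
  let ?a = "l2norm n u" and ?b = "l2norm k w"
  have pos: "(\<Sum>i<n. (u i)\<^sup>2) > 0" "(\<Sum>j<k. (w j)\<^sup>2) > 0"
    using False by (metis less_eq_real_def sum_nonneg zero_le_power2)+
  then have a: "?a > 0" "?a\<^sup>2 = (\<Sum>i<n. (u i)\<^sup>2)" and b: "?b > 0" "?b\<^sup>2 = (\<Sum>j<k. (w j)\<^sup>2)"
    by (auto simp: l2norm_def)
  have "(\<Sum>i<n. ((1/?a) * u i)\<^sup>2) = 1" "(\<Sum>j<k. ((1/?b) * w j)\<^sup>2) = 1"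
    using a b pos by (simp_all add: power_mult_distrib sum_divide_distrib[symmetric] power_divide)
  then have "bilin B n k (\<lambda>i. (1/?a) * u i) (\<lambda>j. (1/?b) * w j) \<in> bilin_values B n k"
    unfolding bilin_values_def by fastforce
  then have "(1/?a) * (1/?b) * bilin B n k u w \<le> mat_norm B n k"
    unfolding mat_norm_def bilin_scale using bilin_values_bdd by (rule cSup_upper)
  then show ?thesis using a b by (simp add: field_simps)
qed

lemma l2norm_le: "(\<Sum>i<d. (u i)\<^sup>2) \<le> c\<^sup>2 \<Longrightarrow> 0 \<le> c \<Longrightarrow> l2norm d u \<le> c"
  unfolding l2norm_def by (metis real_sqrt_abs real_sqrt_le_mono abs_of_nonneg)

lemma l2norm_nonneg: "0 \<le> l2norm d u"
  by (simp add: l2norm_def sum_nonneg)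

text \<open>The net argument: if every pair of unit vectors is \<open>1/6\<close>-approximated by a pair
  \<open>(u', w')\<close> with \<open>\<parallel>u'\<parallel> \<le> 2\<close> on which the bilinear form is at most \<open>t\<close>, then
  \<open>\<parallel>B\<parallel> \<le> t + \<parallel>B\<parallel>/2\<close>, i.e. \<open>\<parallel>B\<parallel> \<le> 2t\<close>.\<close>
lemma mat_norm_net_bound:
  assumes net: "\<And>u w. (\<Sum>i<n. (u i)\<^sup>2) \<le> 1 \<Longrightarrow> (\<Sum>j<k. (w j)\<^sup>2) \<le> 1 \<Longrightarrow>
     \<exists>u' w'. (\<Sum>i<n. (u i - u' i)\<^sup>2) \<le> 1/36 \<and> (\<Sum>i<n. (u' i)\<^sup>2) \<le> 4 \<and>
             (\<Sum>j<k. (w j - w' j)\<^sup>2) \<le> 1/36 \<and> bilin B n k u' w' \<le> t"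
  shows "mat_norm B n k \<le> 2 * t"
proof -
  let ?N = "mat_norm B n k"
  have "Sup (bilin_values B n k) \<le> t + ?N / 2"
  proof (rule cSup_least)
    show "bilin_values B n k \<noteq> {}"
      unfolding bilin_values_def by (auto intro!: exI[of _ "\<lambda>_. 0"])
    fix s assume "s \<in> bilin_values B n k"
    then obtain u w where s: "s = bilin B n k u w"
      and u: "(\<Sum>i<n. (u i)\<^sup>2) \<le> 1" and w: "(\<Sum>j<k. (w j)\<^sup>2) \<le> 1"
      unfolding bilin_values_def by blast
    obtain u' w' where e1: "(\<Sum>i<n. (u i - u' i)\<^sup>2) \<le> 1/36" and e2: "(\<Sum>i<n. (u' i)\<^sup>2) \<le> 4"
      and e3: "(\<Sum>j<k. (w j - w' j)\<^sup>2) \<le> 1/36" and e4: "bilin B n k u' w' \<le> t"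
      using net[OF u w] by blast
    have "l2norm n (\<lambda>i. u i - u' i) \<le> 1/6" "l2norm k (\<lambda>j. w j - w' j) \<le> 1/6"
      using e1 e3 by (intro l2norm_le; simp add: power_divide)+
    moreover have "l2norm n u' \<le> 2" "l2norm k w \<le> 1"
      using e2 w by (intro l2norm_le; simp)+
    ultimately have err: "?N * l2norm n (\<lambda>i. u i - u' i) * l2norm k w \<le> ?N * (1/6) * 1"
                   "?N * l2norm n u' * l2norm k (\<lambda>j. w j - w' j) \<le> ?N * 2 * (1/6)"
      using mat_norm_nonneg l2norm_nonneg by (intro mult_mono; simp)+
    have "bilin B n k u w
        = bilin B n k u' w' + bilin B n k (\<lambda>i. u i - u' i) w + bilin B n k u' (\<lambda>j. w j - w' j)"
      by (simp add: bilin_diff_left bilin_diff_right)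
    also have "\<dots> \<le> t + ?N * l2norm n (\<lambda>i. u i - u' i) * l2norm k w
                     + ?N * l2norm n u' * l2norm k (\<lambda>j. w j - w' j)"
      using e4 bilin_le_mat_norm[of B n k "\<lambda>i. u i - u' i" w]
        bilin_le_mat_norm[of B n k u' "\<lambda>j. w j - w' j"] by linarith
    finally show "s \<le> t + ?N / 2" using s err by simp
  qed
  then show ?thesis by (simp add: mat_norm_def)
qed

text \<open>\<open>\<parallel>B z\<parallel>\<^sup>2 \<le> \<parallel>B\<parallel>\<^sup>2\<close> for unit vectors \<open>z\<close>, using \<open>\<parallel>B z\<parallel>\<^sup>2 = (B z)\<^sup>T B z\<close>.\<close>
lemma mat_vec_sq_le:
  assumes z: "(\<Sum>j<k. (z j)\<^sup>2) = 1"
  shows "(\<Sum>i<n. (mat_vec B k z i)\<^sup>2) \<le> (mat_norm B n k)\<^sup>2"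
proof -
  let ?s = "\<Sum>i<n. (mat_vec B k z i)\<^sup>2"
  have s0: "0 \<le> ?s" by (intro sum_nonneg) auto
  have quad: "bilin B n k (mat_vec B k z) z = ?s"
    unfolding bilin_def power2_eq_square
    by (intro sum.cong refl) (simp add: mat_vec_def sum_distrib_left algebra_simps)
  have "sqrt ?s * sqrt ?s \<le> mat_norm B n k * sqrt ?s"
    using bilin_le_mat_norm[of B n k "mat_vec B k z" z] z s0 by (simp add: quad l2norm_def)
  then have "sqrt ?s \<le> mat_norm B n k"
  proof (cases "sqrt ?s = 0")
    case False
    then have "sqrt ?s > 0" using s0 by simp
    then show ?thesis using \<open>sqrt ?s * sqrt ?s \<le> mat_norm B n k * sqrt ?s\<close>
      by (rule mult_right_le_imp_le[rotated])
  qed (use mat_norm_nonneg in simp)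
  then have "(sqrt ?s)\<^sup>2 \<le> (mat_norm B n k)\<^sup>2" using s0 by (intro power_mono) auto
  then show ?thesis using s0 by simp
qed


section \<open>An explicit net of the unit ball\<close>

text \<open>Integer vectors of length \<open>d\<close> (as lists) with \<open>\<ell>\<^sub>1\<close>-norm at most \<open>R\<close>.\<close>
fun lattice_pts :: "nat \<Rightarrow> nat \<Rightarrow> int list set" where
  "lattice_pts 0 R = {[]}"
| "lattice_pts (Suc d) R =
     (\<Union>a\<in>{..R}. \<Union>s\<in>{1,-1::int}. (\<lambda>l. s * int a # l) ` lattice_pts d (R - a))"

lemma lattice_pts_finite: "finite (lattice_pts d R)"
  by (induction d arbitrary: R) auto

lemma lattice_pts_mem:
  "length l = d \<Longrightarrow> (\<Sum>i<d. nat \<bar>l ! i\<bar>) \<le> R \<Longrightarrow> l \<in> lattice_pts d R"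
proof (induction d arbitrary: l R)
  case 0 then show ?case by simp
next
  case (Suc d)
  then obtain x l' where l: "l = x # l'" and len: "length l' = d" by (cases l) auto
  have "(\<Sum>i<Suc d. nat \<bar>l ! i\<bar>) = nat \<bar>x\<bar> + (\<Sum>i<d. nat \<bar>l' ! i\<bar>)"
    unfolding l by (subst sum.lessThan_Suc_shift) simp
  then have R: "(\<Sum>i<d. nat \<bar>l' ! i\<bar>) \<le> R - nat \<bar>x\<bar>" "nat \<bar>x\<bar> \<le> R" using Suc.prems by auto
  have "x # l' \<in> (\<lambda>l. (if x < 0 then -1 else 1) * int (nat \<bar>x\<bar>) # l) ` lattice_pts d (R - nat \<bar>x\<bar>)"
    using Suc.IH[OF len R(1)] by (intro image_eqI[of _ _ l']) auto
  then show ?case unfolding l lattice_pts.simps using R(2)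
    by (intro UN_I[of "nat \<bar>x\<bar>"] UN_I[of "if x < 0 then -1 else 1"]) auto
qed

lemma geometric_sum_nat_lt: "(\<Sum>a\<le>R. (2::nat) ^ (R - a)) < 2 ^ Suc R"
proof -
  have "(\<Sum>a\<le>R. (2::nat) ^ (R - a)) = (\<Sum>a<Suc R. 2 ^ a)"
    by (rule sum.reindex_bij_witness[of _ "\<lambda>a. R - a" "\<lambda>a. R - a"]) auto
  also have "\<dots> = 2 ^ Suc R - 1" by (simp add: sum_power2 atLeast0LessThan[symmetric])
  finally show ?thesis by simp
qed

lemma lattice_pts_card: "card (lattice_pts d R) \<le> 4 ^ d * 2 ^ R"
proof (induction d arbitrary: R)
  case 0 then show ?case by simp
next
  case (Suc d)
  have signs: "card (\<Union>s\<in>{1,-1::int}. (\<lambda>l. s * int a # l) ` lattice_pts d (R - a))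
      \<le> 2 * (4 ^ d * 2 ^ (R - a))" for a
  proof -
    have "card (\<Union>s\<in>{1,-1::int}. (\<lambda>l. s * int a # l) ` lattice_pts d (R - a))
       \<le> (\<Sum>s\<in>{1,-1::int}. card ((\<lambda>l. s * int a # l) ` lattice_pts d (R - a)))"
      by (rule card_UN_le) simp
    also have "\<dots> \<le> (\<Sum>s\<in>{1,-1::int}. 4 ^ d * 2 ^ (R - a))"
      by (intro sum_mono order_trans[OF card_image_le[OF lattice_pts_finite] Suc.IH])
    finally show ?thesis by simp
  qed
  have "card (lattice_pts (Suc d) R)
      \<le> (\<Sum>a\<le>R. card (\<Union>s\<in>{1,-1::int}. (\<lambda>l. s * int a # l) ` lattice_pts d (R - a)))"
    by simp (rule card_UN_le, simp)
  also have "\<dots> \<le> (\<Sum>a\<le>R. 2 * (4 ^ d * 2 ^ (R - a)))" by (intro sum_mono signs)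
  also have "\<dots> = 2 * 4 ^ d * (\<Sum>a\<le>R. 2 ^ (R - a))" by (simp add: sum_distrib_left mult.assoc)
  also have "\<dots> \<le> 2 * 4 ^ d * 2 ^ Suc R"
    using geometric_sum_nat_lt[of R] by (intro mult_left_mono) auto
  also have "\<dots> = 4 ^ Suc d * 2 ^ R" by simp
  finally show ?case .
qed

definition grid_vec :: "nat \<Rightarrow> int list \<Rightarrow> nat \<Rightarrow> real" where
  "grid_vec d l i = (1 / (6 * sqrt d)) * of_int (l ! i)"

text \<open>A rounded coordinate is small in terms of the coordinate itself:
  \<open>|\<lfloor>6 \<surd>d x\<rfloor>| \<le> 6 \<surd>d |x| + 1 \<le> 3 (d x\<^sup>2 + 1) + 1\<close> by AM-GM.\<close>
lemma rounded_coord_bound: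
  fixes d :: nat and x :: real
  shows "real (nat \<bar>\<lfloor>6 * sqrt d * x\<rfloor>\<bar>) \<le> 3 * d * x\<^sup>2 + 4"
proof -
  have "6 * (sqrt d * \<bar>x\<bar>) \<le> 3 * (d * x\<^sup>2 + 1)"
    using zero_le_power2[of "sqrt d * \<bar>x\<bar> - 1"]
    by (simp add: power2_eq_square algebra_simps)
  moreover have "real (nat \<bar>\<lfloor>6 * sqrt d * x\<rfloor>\<bar>) \<le> \<bar>6 * sqrt d * x\<bar> + 1"
    by linarith
  ultimately show ?thesis by (simp add: abs_mult algebra_simps)
qed

text \<open>Rounding each coordinate of a unit-ball vector down to the grid moves it by at
  most \<open>1/(6 \<surd>d)\<close>, hence by at most \<open>1/6\<close> in norm; the rounded vector has norm at
  most 2, and its integer coordinates have \<open>\<ell>\<^sub>1\<close>-norm at most \<open>7 d\<close>.\<close>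
lemma grid_rounding:
  assumes u: "(\<Sum>i<d. (u i)\<^sup>2) \<le> 1"
  shows "\<exists>l \<in> lattice_pts d (7*d).
           (\<Sum>i<d. (u i - grid_vec d l i)\<^sup>2) \<le> 1/36 \<and> (\<Sum>i<d. (grid_vec d l i)\<^sup>2) \<le> 4"
proof (cases "d = 0")
  case True then show ?thesis by (intro bexI[of _ "[]"]) auto
next
  case False
  define c where "c = 6 * sqrt d"
  have c: "c > 0" using False by (simp add: c_def)
  define l where "l = map (\<lambda>i. \<lfloor>c * u i\<rfloor>) [0..<d]"
  have li: "l ! i = \<lfloor>c * u i\<rfloor>" if "i < d" for i using that by (simp add: l_def)
  have err: "0 \<le> u i - grid_vec d l i \<and> u i - grid_vec d l i \<le> 1 / c" if "i < d" for i
  proof -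
    have "grid_vec d l i = of_int \<lfloor>c * u i\<rfloor> / c"
      by (simp add: grid_vec_def li[OF that] c_def)
    then have "c * (u i - grid_vec d l i) = c * u i - of_int \<lfloor>c * u i\<rfloor>"
      using c by (simp add: algebra_simps)
    moreover have "of_int \<lfloor>c * u i\<rfloor> \<le> c * u i" "c * u i < of_int \<lfloor>c * u i\<rfloor> + 1"
      by linarith+
    ultimately have "0 \<le> c * (u i - grid_vec d l i)" "c * (u i - grid_vec d l i) \<le> 1"
      by linarith+
    then show ?thesis
      using c by (simp add: zero_le_mult_iff pos_le_divide_eq mult.commute)
  qed
  have e1: "(\<Sum>i<d. (u i - grid_vec d l i)\<^sup>2) \<le> 1/36"
  proof -
    have "(\<Sum>i<d. (u i - grid_vec d l i)\<^sup>2) \<le> (\<Sum>i<d. (1 / c)\<^sup>2)"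
      using err by (intro sum_mono power_mono) auto
    also have "\<dots> = 1/36" using False by (simp add: c_def power_divide power_mult_distrib)
    finally show ?thesis .
  qed
  have e2: "(\<Sum>i<d. (grid_vec d l i)\<^sup>2) \<le> 4"
  proof -
    have "(grid_vec d l i)\<^sup>2 \<le> 2 * (u i)\<^sup>2 + 2 * (u i - grid_vec d l i)\<^sup>2" for i
      using zero_le_power2[of "2 * u i - grid_vec d l i"]
      by (simp add: power2_eq_square algebra_simps)
    then have "(\<Sum>i<d. (grid_vec d l i)\<^sup>2)
        \<le> 2 * (\<Sum>i<d. (u i)\<^sup>2) + 2 * (\<Sum>i<d. (u i - grid_vec d l i)\<^sup>2)"
      by (simp add: sum_mono sum.distrib[symmetric] sum_distrib_left)
    then show ?thesis using u e1 by simp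
  qed
  have "real (\<Sum>i<d. nat \<bar>l ! i\<bar>) \<le> (\<Sum>i<d. 3 * d * (u i)\<^sup>2 + 4)"
    unfolding of_nat_sum using rounded_coord_bound by (intro sum_mono) (simp add: li c_def)
  also have "\<dots> = 3 * d * (\<Sum>i<d. (u i)\<^sup>2) + 4 * d" by (simp add: sum.distrib sum_distrib_left)
  also have "\<dots> \<le> real (7 * d)" using u by (simp add: mult_left_le)
  finally have "(\<Sum>i<d. nat \<bar>l ! i\<bar>) \<le> 7 * d" by (simp only: of_nat_le_iff)
  then have "l \<in> lattice_pts d (7*d)" by (intro lattice_pts_mem) (auto simp: l_def)
  then show ?thesis using e1 e2 by blast
qed

definition grid_net :: "nat \<Rightarrow> (nat \<Rightarrow> real) set" where
  "grid_net d = grid_vec d ` {l \<in> lattice_pts d (7*d). (\<Sum>i<d. (grid_vec d l i)\<^sup>2) \<le> 4}"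

lemma grid_net_finite: "finite (grid_net d)"
  unfolding grid_net_def by (simp add: lattice_pts_finite)

lemma grid_net_card: "card (grid_net d) \<le> 2 ^ (9 * d)"
proof -
  have "card (grid_net d) \<le> card (lattice_pts d (7*d))"
    unfolding grid_net_def
    by (rule order_trans[OF card_image_le card_mono]) (auto simp: lattice_pts_finite)
  also have "\<dots> \<le> 4 ^ d * 2 ^ (7 * d)" by (rule lattice_pts_card)
  also have "\<dots> = 2 ^ (2 * d) * 2 ^ (7 * d)" by (simp add: power_mult)
  also have "\<dots> = 2 ^ (9 * d)" by (simp add: power_add[symmetric])
  finally show ?thesis .
qed

lemma grid_net_approx:
  assumes "(\<Sum>i<d. (u i)\<^sup>2) \<le> 1"
  shows "\<exists>v \<in> grid_net d. (\<Sum>i<d. (u i - v i)\<^sup>2) \<le> 1/36 \<and> (\<Sum>i<d. (v i)\<^sup>2) \<le> 4"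
  using grid_rounding[OF assms] unfolding grid_net_def by blast


section \<open>The operator norm of a Gaussian matrix is \<open>O(\<surd>n)\<close>\<close>

text \<open>For fixed \<open>u, w\<close>, \<open>u\<^sup>T B w\<close> is a Gaussian linear form with variance
  \<open>\<parallel>u\<parallel>\<^sup>2 \<parallel>w\<parallel>\<^sup>2\<close>.\<close>
lemma bilin_tail:
  assumes s: "(\<Sum>i<n. (u i)\<^sup>2) * (\<Sum>j<k. (w j)\<^sup>2) \<le> s" "s > 0" and t: "t \<ge> 0"
  shows "measure (gaussian_matrix n k) {B \<in> space (gaussian_matrix n k). t \<le> bilin B n k u w}
     \<le> exp (- t\<^sup>2 / (2 * s))"
proof -
  let ?a = "\<lambda>x. u (fst x) * w (snd x)"
  have "bilin B n k u w = (\<Sum>x\<in>{..<n}\<times>{..<k}. ?a x * B x)" for B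
    unfolding bilin_def sum.cartesian_product' by (intro sum.cong refl) (simp add: mult_ac)
  moreover have "(\<Sum>x\<in>{..<n}\<times>{..<k}. (?a x)\<^sup>2) = (\<Sum>i<n. (u i)\<^sup>2) * (\<Sum>j<k. (w j)\<^sup>2)"
    unfolding sum.cartesian_product' sum_product by (simp add: power_mult_distrib)
  ultimately show ?thesis
    using gaussian_linear_form_tail[where a = ?a and s = s and t = t] s t by simp
qed

definition net_exceed :: "nat \<Rightarrow> nat \<Rightarrow> real \<Rightarrow> (nat \<times> nat \<Rightarrow> real) set" where
  "net_exceed n k t = (\<Union>x\<in>grid_net n \<times> grid_net k.
     {B \<in> space (gaussian_matrix n k). t \<le> bilin B n k (fst x) (snd x)})"

lemma net_exceed_sets: "net_exceed n k t \<in> sets (gaussian_matrix n k)"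
  unfolding net_exceed_def bilin_def gaussian_matrix_def
  by (intro sets.finite_UN) (auto simp: grid_net_finite)

text \<open>Union bound: at most \<open>2\<^sup>1\<^sup>8\<^sup>n \<le> e\<^sup>1\<^sup>8\<^sup>n\<close> pairs, each exceeding \<open>\<surd>(608 n)\<close>
  with probability at most \<open>exp (-608 n / 32) = e\<^sup>-\<^sup>1\<^sup>9\<^sup>n\<close>.\<close>
lemma net_exceed_prob:
  assumes kn: "k \<le> n"
  shows "measure (gaussian_matrix n k) (net_exceed n k (sqrt (608 * real n))) \<le> exp (- real n)"
proof -
  let ?M = "gaussian_matrix n k"
  interpret prob_space ?M by (rule prob_space_gaussian_matrix)
  let ?t = "sqrt (608 * real n)"
  define N where "N = grid_net n \<times> grid_net k"
  define Bad where "Bad = (\<lambda>x. {B \<in> space ?M. ?t \<le> bilin B n k (fst x) (snd x)})"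
  have N: "finite N" unfolding N_def by (simp add: grid_net_finite)
  have Bad_prob: "measure ?M (Bad x) \<le> exp (- 19 * real n)" if "x \<in> N" for x
  proof -
    have "(\<Sum>i<n. (fst x i)\<^sup>2) \<le> 4" "(\<Sum>j<k. (snd x j)\<^sup>2) \<le> 4"
      using that unfolding N_def grid_net_def by auto
    then have "(\<Sum>i<n. (fst x i)\<^sup>2) * (\<Sum>j<k. (snd x j)\<^sup>2) \<le> 4 * 4"
      by (intro mult_mono) (auto intro: sum_nonneg)
    moreover have "- ?t\<^sup>2 / (2 * 16) = - 19 * real n" by simp
    ultimately show ?thesis
      using bilin_tail[where u = "fst x" and w = "snd x" and s = 16 and t = ?t]
      unfolding Bad_def by simp
  qed
  have card_N: "real (card N) \<le> 2 ^ (9 * n) * 2 ^ (9 * n)"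
  proof -
    have "card (grid_net k) \<le> 2 ^ (9 * n)"
      using order_trans[OF grid_net_card power_increasing[of "9 * k" "9 * n" "2::nat"]] kn by simp
    then have "card N \<le> 2 ^ (9 * n) * 2 ^ (9 * n)"
      unfolding N_def card_cartesian_product using grid_net_card[of n] by (intro mult_mono) auto
    then have "real (card N) \<le> real (2 ^ (9 * n) * 2 ^ (9 * n))" by (rule of_nat_mono)
    then show ?thesis by simp
  qed
  have "(2::real) ^ (9 * n) \<le> exp 1 ^ (9 * n)"
    using exp_ge_add_one_self[of 1] by (intro power_mono) auto
  then have two_le_e: "(2::real) ^ (9 * n) \<le> exp (9 * real n)"
    by (simp add: exp_of_nat_mult[symmetric])
  have "measure ?M (net_exceed n k ?t) \<le> (\<Sum>x\<in>N. measure ?M (Bad x))"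
    unfolding net_exceed_def N_def[symmetric] Bad_def[symmetric]
    using N by (intro finite_measure_subadditive_finite) (auto simp: Bad_def bilin_def gaussian_matrix_def)
  also have "\<dots> \<le> real (card N) * exp (- 19 * real n)"
    using sum_mono[OF Bad_prob] by simp
  also have "\<dots> \<le> 2 ^ (9 * n) * 2 ^ (9 * n) * exp (- 19 * real n)"
    using card_N by (intro mult_right_mono) auto
  also have "\<dots> \<le> exp (9 * real n) * exp (9 * real n) * exp (- 19 * real n)"
    using two_le_e by (intro mult_right_mono mult_mono) auto
  also have "\<dots> = exp (- real n)" by (simp add: exp_add[symmetric])
  finally show ?thesis .
qed

lemma mat_norm_high_prob:
  assumes kn: "k \<le> n"
  shows "\<exists>G \<in> sets (gaussian_matrix n k).
           1 - exp (- real n) \<le> measure (gaussian_matrix n k) G \<and>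
           (\<forall>B\<in>G. mat_norm B n k \<le> 2 * sqrt (608 * real n))"
proof -
  let ?M = "gaussian_matrix n k"
  interpret prob_space ?M by (rule prob_space_gaussian_matrix)
  let ?t = "sqrt (608 * real n)"
  define G where "G = space ?M - net_exceed n k ?t"
  have "G \<in> sets ?M" "1 - exp (- real n) \<le> measure ?M G"
    using net_exceed_sets net_exceed_prob[OF kn] prob_compl[of "net_exceed n k ?t"]
    unfolding G_def by auto
  moreover have "mat_norm B n k \<le> 2 * ?t" if "B \<in> G" for B
  proof (rule mat_norm_net_bound)
    fix u w :: "nat \<Rightarrow> real"
    assume "(\<Sum>i<n. (u i)\<^sup>2) \<le> 1" "(\<Sum>j<k. (w j)\<^sup>2) \<le> 1"
    then obtain u' w' where "u' \<in> grid_net n" "w' \<in> grid_net k"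
      and "(\<Sum>i<n. (u i - u' i)\<^sup>2) \<le> 1/36" "(\<Sum>i<n. (u' i)\<^sup>2) \<le> 4"
      and "(\<Sum>j<k. (w j - w' j)\<^sup>2) \<le> 1/36"
      using grid_net_approx by meson
    moreover have "bilin B n k u' w' \<le> ?t"
      using \<open>B \<in> G\<close> \<open>u' \<in> grid_net n\<close> \<open>w' \<in> grid_net k\<close>
      unfolding G_def net_exceed_def by force
    ultimately show "\<exists>u' w'. (\<Sum>i<n. (u i - u' i)\<^sup>2) \<le> 1/36 \<and> (\<Sum>i<n. (u' i)\<^sup>2) \<le> 4 \<and>
             (\<Sum>j<k. (w j - w' j)\<^sup>2) \<le> 1/36 \<and> bilin B n k u' w' \<le> ?t"
      by blast
  qed
  ultimately show ?thesis by blast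
qed


section \<open>Measurability of the event\<close>

text \<open>The event quantifies over the uncountable sphere; it is measurable because it is
  open: the function involved is jointly continuous and the sphere is compact.\<close>

lemma unit_sphere_compact: "compact (unit_sphere k)"
proof -
  let ?S = "\<lambda>j::nat. if j < k then {-1..1::real} else {0}"
  have box: "compact (PiE UNIV ?S)"
  proof -
    have "compactin (product_topology (\<lambda>_. euclidean) UNIV) (PiE UNIV ?S)"
      by (subst compactin_PiE) auto
    then show ?thesis by (simp add: euclidean_product_topology)
  qed
  have norm1: "closed {z::nat\<Rightarrow>real. (\<Sum>j<k. (z j)\<^sup>2) = 1}"
    by (intro closed_Collect_eq continuous_intros
          continuous_on_compose2[OF continuous_on_product_coordinates]) auto
  have "unit_sphere k = PiE UNIV ?S \<inter> {z. (\<Sum>j<k. (z j)\<^sup>2) = 1}"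
  proof (intro set_eqI iffI)
    fix z assume z: "z \<in> unit_sphere k"
    then have "\<bar>z j\<bar> \<le> 1" if "j < k" for j
      using coord_le_1[where u = z and d = k and i = j] that by (simp add: unit_sphere_def)
    then show "z \<in> PiE UNIV ?S \<inter> {z. (\<Sum>j<k. (z j)\<^sup>2) = 1}"
      using z by (auto simp: unit_sphere_def PiE_def abs_le_iff)
  next
    fix z assume z: "z \<in> PiE UNIV ?S \<inter> {z. (\<Sum>j<k. (z j)\<^sup>2) = 1}"
    then have "z j \<in> ?S j" for j by (auto simp: PiE_def Pi_def)
    then have "z j = 0" if "k \<le> j" for j using that by (metis empty_iff insert_iff not_le)
    then show "z \<in> unit_sphere k" using z by (simp add: unit_sphere_def)
  qed
  then show ?thesis using box norm1 by auto
qed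

text \<open>Tube lemma consequence: \<open>{x. \<forall>z\<in>K. h x z < c}\<close> is open for continuous \<open>h\<close> and
  compact \<open>K\<close>.\<close>
lemma open_uniform_strict_bound:
  fixes h :: "'a::topological_space \<Rightarrow> 'b::topological_space \<Rightarrow> real"
  assumes h: "continuous_on UNIV (\<lambda>x. h (fst x) (snd x))" and K: "compact K"
  shows "open {x. \<forall>z\<in>K. h x z < c}"
proof -
  have W: "open {x. h (fst x) (snd x) < c}"
    by (rule open_Collect_less[OF h continuous_on_const])
  show ?thesis
  proof (subst open_subopen, intro ballI)
    fix x0 assume "x0 \<in> {x. \<forall>z\<in>K. h x z < c}"
    then have "{x0} \<times> K \<subseteq> {x. h (fst x) (snd x) < c}" by auto
    from Elementary_Topology.tube_lemma[OF K W this] obtain X0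
      where X0: "x0 \<in> X0" "open X0" "X0 \<times> K \<subseteq> {x. h (fst x) (snd x) < c}"
      by blast
    then have "X0 \<subseteq> {x. \<forall>z\<in>K. h x z < c}" by auto
    then show "\<exists>T. open T \<and> x0 \<in> T \<and> T \<subseteq> {x. \<forall>z\<in>K. h x z < c}" using X0 by blast
  qed
qed

text \<open>The quantity of the theorem, written without the data-dependent index set:
  \<open>\<Sum>\<^sub>i\<^sub>\<in>\<^sub>T (max 0 (-\<sigma>\<^sub>i (Bz)\<^sub>i)) powr p\<close>.\<close>
definition neg_part_sum ::
    "nat \<Rightarrow> nat set \<Rightarrow> (nat \<Rightarrow> real) \<Rightarrow> real \<Rightarrow> (nat \<times> nat \<Rightarrow> real) \<Rightarrow> (nat \<Rightarrow> real) \<Rightarrow> real" where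
  "neg_part_sum k T \<sigma> p B z = (\<Sum>i\<in>T. (max 0 (-(\<sigma> i * mat_vec B k z i))) powr p)"

lemma neg_part_sum_eq:
  assumes "finite T" "\<forall>i\<in>T. \<sigma> i = -1 \<or> \<sigma> i = 1"
  shows "(\<Sum>i\<in>T_minus B k T \<sigma> z. \<bar>mat_vec B k z i\<bar> powr p) = neg_part_sum k T \<sigma> p B z"
  unfolding T_minus_def neg_part_sum_def
  by (subst sum.inter_filter[OF assms(1)], intro sum.cong refl) (use assms(2) in \<open>auto simp: max_def\<close>)

lemma neg_part_sum_continuous:
  assumes "p > 0"
  shows "continuous_on UNIV (\<lambda>x. neg_part_sum k T \<sigma> p (fst x) (snd x))"
proof -
  have coord: "continuous_on UNIV (\<lambda>x. fst x a)" "continuous_on UNIV (\<lambda>x. snd x b)"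
    for a :: "nat \<times> nat" and b :: nat
    by (rule continuous_on_compose2[OF continuous_on_product_coordinates continuous_on_fst]
        continuous_on_compose2[OF continuous_on_product_coordinates continuous_on_snd]; simp)+
  show ?thesis
    unfolding neg_part_sum_def mat_vec_def using assms
    by (intro continuous_intros continuous_on_powr' coord) auto
qed

text \<open>The identity map of the matrix space is Borel measurable into the product topology
  on all functions (entries outside the index range are constant on the space).\<close>
lemma gaussian_matrix_id_measurable: "(\<lambda>B. B) \<in> borel_measurable (gaussian_matrix n k)"
proof (rule measurable_coordinatewise_then_product)
  fix x :: "nat \<times> nat"
  show "(\<lambda>B. B x) \<in> borel_measurable (gaussian_matrix n k)"
  proof (cases "x \<in> {..<n} \<times> {..<k}")
    case True
    then show ?thesis unfolding gaussian_matrix_def by measurable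
  next
    case False
    then have "B x = undefined" if "B \<in> space (gaussian_matrix n k)" for B
      using that unfolding gaussian_matrix_def
      by (cases x) (auto simp: space_PiM PiE_def extensional_def)
    then show ?thesis by (subst measurable_cong[where g = "\<lambda>_. undefined"]) auto
  qed
qed

lemma event_sets:
  assumes "p > 0" "finite T" "\<forall>i\<in>T. \<sigma> i = -1 \<or> \<sigma> i = 1"
  shows "{B \<in> space (gaussian_matrix n k). \<forall>z \<in> unit_sphere k.
            (\<Sum>i\<in>T_minus B k T \<sigma> z. \<bar>mat_vec B k z i\<bar> powr p) < c} \<in> sets (gaussian_matrix n k)"
proof -
  let ?U = "{B. \<forall>z\<in>unit_sphere k. neg_part_sum k T \<sigma> p B z < c}"
  have "open ?U"
    by (rule open_uniform_strict_bound[OF neg_part_sum_continuous[OF assms(1)] unit_sphere_compact])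
  then have "(\<lambda>B. B) -` ?U \<inter> space (gaussian_matrix n k) \<in> sets (gaussian_matrix n k)"
    by (intro measurable_sets[OF gaussian_matrix_id_measurable]) simp
  then show ?thesis using neg_part_sum_eq[OF assms(2,3)] by (simp add: Int_def conj_commute)
qed


text \<open>\<open>|x| powr p \<le> 1 + x\<^sup>2\<close> for \<open>0 < p \<le> 1\<close>: compare with 1 when \<open>|x| \<le> 1\<close> and with
  \<open>|x| \<le> x\<^sup>2\<close> otherwise.\<close>
lemma abs_powr_le_1_plus_sq:
  assumes p: "0 < p" "p \<le> 1"
  shows "\<bar>x::real\<bar> powr p \<le> 1 + x\<^sup>2"
proof (cases "\<bar>x\<bar> \<le> 1")
  case True
  then have "\<bar>x\<bar> powr p \<le> 1 powr p" using p by (intro powr_mono2) auto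
  then show ?thesis by (simp add: add_increasing2)
next
  case False
  then have "\<bar>x\<bar> powr p \<le> \<bar>x\<bar> powr 1" using p by (intro powr_mono) auto
  also have "\<dots> = \<bar>x\<bar> * 1" using False by simp
  also have "\<dots> \<le> \<bar>x\<bar> * \<bar>x\<bar>" using False by (intro mult_left_mono) auto
  also have "\<dots> = x\<^sup>2" by (simp add: power2_eq_square abs_mult_self_eq)
  finally show ?thesis by simp
qed

lemma neg_part_powr_sum_le:
  assumes T: "T \<subseteq> {..<n}" and p: "0 < p" "p \<le> 1" and z: "z \<in> unit_sphere k"
  shows "(\<Sum>i\<in>T_minus B k T \<sigma> z. \<bar>mat_vec B k z i\<bar> powr p) \<le> real n + (mat_norm B n k)\<^sup>2"
proof -
  have "(\<Sum>i\<in>T_minus B k T \<sigma> z. \<bar>mat_vec B k z i\<bar> powr p)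
      \<le> (\<Sum>i\<in>T_minus B k T \<sigma> z. 1 + (mat_vec B k z i)\<^sup>2)"
    by (intro sum_mono abs_powr_le_1_plus_sq p)
  also have "\<dots> \<le> (\<Sum>i<n. 1 + (mat_vec B k z i)\<^sup>2)"
    using T by (intro sum_mono2) (auto simp: T_minus_def add_nonneg_nonneg)
  also have "\<dots> = real n + (\<Sum>i<n. (mat_vec B k z i)\<^sup>2)" by (simp add: sum.distrib)
  also have "\<dots> \<le> real n + (mat_norm B n k)\<^sup>2"
    using mat_vec_sq_le z by (simp add: unit_sphere_def)
  finally show ?thesis .
qed

text \<open>The theorem for fixed \<open>n\<close> and \<open>k \<le> n\<close>: on the high-probability event,
  \<open>n + \<parallel>B\<parallel>\<^sup>2 \<le> n + 4 \<cdot> 608 n = 2433 n < 2434 n\<close>.\<close>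
lemma event_prob_bound:
  assumes kn: "k \<le> n" and n: "1 \<le> n" and T: "T \<subseteq> {..<n}"
    and \<sigma>: "\<forall>i\<in>T. \<sigma> i = -1 \<or> \<sigma> i = 1" and p: "0 < p" "p \<le> 1"
  shows "1 - exp (- real n) \<le> measure (gaussian_matrix n k)
     {B \<in> space (gaussian_matrix n k). \<forall>z\<in>unit_sphere k.
        (\<Sum>i\<in>T_minus B k T \<sigma> z. \<bar>mat_vec B k z i\<bar> powr p) < 2434 * real n}"
    (is "_ \<le> measure ?M ?E")
proof -
  obtain G where G: "G \<in> sets ?M" "1 - exp (- real n) \<le> measure ?M G"
    and norm: "\<And>B. B \<in> G \<Longrightarrow> mat_norm B n k \<le> 2 * sqrt (608 * real n)"
    using mat_norm_high_prob[OF kn] by blast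
  interpret prob_space ?M by (rule prob_space_gaussian_matrix)
  have "B \<in> ?E" if "B \<in> G" for B
  proof -
    have "(mat_norm B n k)\<^sup>2 \<le> (2 * sqrt (608 * real n))\<^sup>2"
      using norm[OF that] mat_norm_nonneg by (intro power_mono) auto
    then have "real n + (mat_norm B n k)\<^sup>2 < 2434 * real n"
      using n by (simp add: power_mult_distrib)
    then show ?thesis
      using neg_part_powr_sum_le[OF T p] sets.sets_into_space[OF G(1)] that
      by (fastforce intro: le_less_trans)
  qed
  moreover have "?E \<in> sets ?M"
    using p \<sigma> by (intro event_sets) (auto intro: finite_subset[OF T])
  ultimately have "measure ?M G \<le> measure ?M ?E"
    by (intro finite_measure_mono) auto
  then show ?thesis using G(2) by linarith
qed

text \<open>Take \<open>lam_max = 2434/\<rho>\<close>, \<open>c15 = 1\<close> and \<open>N = 1\<close>.\<close>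
theorem lemma9:
  fixes \<alpha> p \<rho> :: real
  assumes "0 < \<alpha>" "\<alpha> < 1" "0 < p" "p \<le> 1" "0 < \<rho>" "\<rho> < 1"
  shows "\<exists>lam_max > 0. \<exists>c15 > 0. \<exists>N. \<forall>n \<ge> N.
     \<forall>T \<sigma>. T \<subseteq> {..<n} \<longrightarrow> card T = nat \<lfloor>\<rho> * real n\<rfloor> \<longrightarrow>
       (\<forall>i\<in>T. \<sigma> i = -1 \<or> \<sigma> i = 1) \<longrightarrow>
       (let m = nat \<lfloor>\<alpha> * real n\<rfloor>; k = n - m in
        measure (gaussian_matrix n k)
          {B \<in> space (gaussian_matrix n k).
             \<forall>z \<in> unit_sphere k.
               (\<Sum>i\<in>T_minus B k T \<sigma> z. \<bar>mat_vec B k z i\<bar> powr p) < \<rho> * lam_max * real n}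
        \<ge> 1 - exp (- c15 * real n))"
proof -
  have lam_pos: "2434 / \<rho> > 0" using assms by simp
  have scale: "\<rho> * (2434 / \<rho>) * real n = 2434 * real n" for n using assms by simp
  show ?thesis
    apply (rule exI[of _ "2434 / \<rho>"], rule conjI[OF lam_pos], rule exI[of _ "1::real"],
        rule conjI[OF zero_less_one], rule exI[of _ "1::nat"], intro allI impI)
    subgoal for n T \<sigma>
      using event_prob_bound[of "n - nat \<lfloor>\<alpha> * real n\<rfloor>" n T \<sigma> p] assms
      by (simp add: Let_def scale)
    done
qed

end
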